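(* Let $I$ be the tridendriform ideal of $\mathcal{A}$ generated by $\{x\cdot y:x,y\in\mathcal A^+\}$, let $\overline{\Delta}$ be the coproduct induced by $\Delta$ on $\mathcal{A}/I$ and write $\bar x$ for the class of $x$. Define recursively, for every planar binary tree $t$, an element $\Delta_{LR}(t)\in(\mathcal A/I)\otimes(\mathcal A/I)$ of the form $\sum_{(X,s)}X\otimes\bar s$ (finite sum, $X\in\mathcal A/I$, $s$ binary trees) by $\Delta_{LR}(|)=\bar|\otimes\bar|$ and, for $t=t_1\vee t_2$ with $\Delta_{LR}(t_1)=\sum_{(X,s)}X\otimes\bar s$ and $\Delta_{LR}(t_2)=\sum_{(Z,r)}Z\otimes\bar r$, $$\Delta_{LR}(t)=\sum_{(X,s),(Z,r)}(X*Z)\otimes\overline{s\vee r}+\bar t\otimes\bar|.$$ Then $\overline{\Delta}(\bar t)=\Delta_{LR}(t)$ for every planar binary tree $t$ (this is the Loday–Ronco coproduct).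
   Context: Trees: planar rooted trees in which every internal vertex has at least two children; the root vertex hangs from a trunk edge; leaves are edges without upper vertex; $|$ is the one-leaf tree; binary trees are those in which every internal vertex has exactly two children. $\mathcal A$ is the $\mathbb K$-span of all trees, $\mathcal A^+$ that of trees $\neq|$. Products: $x_0\vee\cdots\vee x_k$ ($k\ge1$) grafts trees left to right on a new root; for $x=x^{(0)}\vee\cdots\vee x^{(k)}$, $y=y^{(0)}\vee\cdots\vee y^{(l)}$: $x\prec y=x^{(0)}\vee\cdots\vee x^{(k-1)}\vee(x^{(k)}*y)$, $x\cdot y=x^{(0)}\vee\cdots\vee x^{(k-1)}\vee(x^{(k)}*y^{(0)})\vee y^{(1)}\vee\cdots\vee y^{(l)}$, $x\succ y=(x*y^{(0)})\vee y^{(1)}\vee\cdots\vee y^{(l)}$, $*=\prec+\cdot+\succ$, $|*z=z*|=z$; for $a\in\mathcal A^+$: $|\prec a=0$, $a\prec|=a$, $|\succ a=a$, $a\succ|=0$, $|\cdot a=a\cdot|=0$. A tridendriform ideal is a subspace $J$ with $x\ltimes y\in J$ whenever $x\in J$ or $y\in J$; $*$ descends to $\mathcal A/I$. Coproduct: $\Delta(|)=|\otimes|$, $\Delta(t)=\sum_c G^c(t)\otimes P^c(t)$ over admissible cuts of $t$ (internal edges join two internal vertices; a cut is a nonempty set of internal edges, plus the empty and total (below the root) cuts; admissible if every root-to-leaf path meets at most one chosen edge; $P^c(t)$ the component containing the root, $G^c(t)$ the $*$-product of the cut-off trees from left to right; empty cut: $P^c=t,G^c=|$; total cut: $P^c=|,G^c=t$).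 One has $\Delta(I)\subseteq I\otimes\mathcal A+\mathcal A\otimes I$, so $\Delta$ induces $\overline\Delta:\mathcal A/I\to(\mathcal A/I)\otimes(\mathcal A/I)$. *)

theory Defs
  imports Main "HOL-Library.Poly_Mapping" "HOL-Library.Sublist"
begin

text \<open>A tree is either the one-leaf tree (Leaf, written | in the paper) or a root vertex
  (hanging from the trunk) carrying the ordered list of its subtrees, grafted left to right.\<close>

datatype tree = Leaf | Node "tree list"

fun wf_tree :: "tree \<Rightarrow> bool" where
  "wf_tree Leaf = True"
| "wf_tree (Node ts) = (2 \<le> length ts \<and> list_all wf_tree ts)"

fun binary_tree :: "tree \<Rightarrow> bool" where
  "binary_tree Leaf = True"
| "binary_tree (Node ts) = (length ts = 2 \<and> list_all binary_tree ts)"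

lemma size_mem_Node: "s \<in> set ts \<Longrightarrow> size s < size (Node ts)"
  by (induct ts) auto

lemma size_mem_list: "(s::tree) \<in> set ts \<Longrightarrow> size s < Suc (size_list size ts)"
  using size_mem_Node[of s ts] by simp

lemma size_last_Node: "(ts::tree list) \<noteq> [] \<Longrightarrow> size (last ts) < Suc (size_list size ts)"
  by (rule size_mem_list) simp

lemma size_hd_Node: "(ts::tree list) \<noteq> [] \<Longrightarrow> size (hd ts) < Suc (size_list size ts)"
  by (rule size_mem_list) simp

text \<open>An element of the K-span of trees is a finitely supported function tree \<Rightarrow> K;
  the elements of the span of trees in the sense of the paper (the space A) are those
  supported on well-formed trees.  The tensor product of the span with itself is
  identified with the span of pairs of trees.\<close>

definition inA :: "(tree \<Rightarrow>\<^sub>0 'k::zero) \<Rightarrow> bool" where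
  "inA x \<longleftrightarrow> (\<forall>t\<in>Poly_Mapping.keys x. wf_tree t)"

definition inAplus :: "(tree \<Rightarrow>\<^sub>0 'k::zero) \<Rightarrow> bool" where
  "inAplus x \<longleftrightarrow> (\<forall>t\<in>Poly_Mapping.keys x. wf_tree t \<and> t \<noteq> Leaf)"

definition vec :: "tree \<Rightarrow> (tree \<Rightarrow>\<^sub>0 'k::{zero,one})" where
  "vec t = Poly_Mapping.single t 1"

definition scale :: "'k::semiring_0 \<Rightarrow> ('a \<Rightarrow>\<^sub>0 'k) \<Rightarrow> ('a \<Rightarrow>\<^sub>0 'k)" where
  "scale c v = Poly_Mapping.map ((*) c) v"

definition bilin :: "(tree \<Rightarrow> tree \<Rightarrow> ('a \<Rightarrow>\<^sub>0 'k::comm_semiring_1))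
    \<Rightarrow> (tree \<Rightarrow>\<^sub>0 'k) \<Rightarrow> (tree \<Rightarrow>\<^sub>0 'k) \<Rightarrow> ('a \<Rightarrow>\<^sub>0 'k)" where
  "bilin f x y = (\<Sum>s\<in>Poly_Mapping.keys x. \<Sum>r\<in>Poly_Mapping.keys y. scale (Poly_Mapping.lookup x s * Poly_Mapping.lookup y r) (f s r))"

definition tens :: "(tree \<Rightarrow>\<^sub>0 'k::comm_semiring_1) \<Rightarrow> (tree \<Rightarrow>\<^sub>0 'k) \<Rightarrow> (tree \<times> tree \<Rightarrow>\<^sub>0 'k)" where
  "tens x y = (\<Sum>s\<in>Poly_Mapping.keys x. \<Sum>r\<in>Poly_Mapping.keys y. Poly_Mapping.single (s, r) (Poly_Mapping.lookup x s * Poly_Mapping.lookup y r))"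

definition graftmid :: "tree list \<Rightarrow> (tree \<Rightarrow>\<^sub>0 'k::comm_semiring_1) \<Rightarrow> tree list \<Rightarrow> (tree \<Rightarrow>\<^sub>0 'k)" where
  "graftmid pre v post = (\<Sum>c\<in>Poly_Mapping.keys v. Poly_Mapping.single (Node (pre @ c # post)) (Poly_Mapping.lookup v c))"

text \<open>The total product * on basis trees, defined by  * = \<prec> + \<cdot> + \<succ>  for trees different from |,
  and with | as unit.  For x = x0 \<or> ... \<or> xk, y = y0 \<or> ... \<or> yl:
   x \<prec> y = x0 \<or> ... \<or> x(k-1) \<or> (xk * y),
   x \<cdot> y = x0 \<or> ... \<or> x(k-1) \<or> (xk * y0) \<or> y1 \<or> ... \<or> yl,
   x \<succ> y = (x * y0) \<or> y1 \<or> ... \<or> yl.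
  (The branch for Node [] never occurs for well-formed trees.)\<close>

function star_t :: "tree \<Rightarrow> tree \<Rightarrow> (tree \<Rightarrow>\<^sub>0 'k::comm_semiring_1)" where
  "star_t Leaf y = vec y"
| "star_t (Node xs) Leaf = vec (Node xs)"
| "star_t (Node xs) (Node ys) =
     (if xs = [] \<or> ys = [] then 0 else
        graftmid (butlast xs) (star_t (last xs) (Node ys)) []
      + graftmid (butlast xs) (star_t (last xs) (hd ys)) (tl ys)
      + graftmid [] (star_t (Node xs) (hd ys)) (tl ys))"
  by pat_completeness auto
termination
proof (relation "measure (\<lambda>(x, y). size x + size y)", goal_cases)
  case 1 show ?case by simp
next
  case (2 xs ys) thus ?case using size_last_Node[of xs] by simp
next
  case (3 xs ys) thus ?case using size_last_Node[of xs] size_hd_Node[of ys] by simp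
next
  case (4 xs ys) thus ?case using size_hd_Node[of ys] by simp
qed

text \<open>The three partial products on basis trees, with the conventions
  | \<prec> a = 0, a \<prec> | = a, | \<succ> a = a, a \<succ> | = 0, | \<cdot> a = a \<cdot> | = 0 for a \<noteq> |
  (for a = | both sides, any convention compatible with |*| = | is irrelevant for the theorem;
  we take | \<prec> | = | \<cdot> | = | \<succ> | = 0).\<close>

fun prec_t :: "tree \<Rightarrow> tree \<Rightarrow> (tree \<Rightarrow>\<^sub>0 'k::comm_semiring_1)" where
  "prec_t Leaf y = 0"
| "prec_t (Node xs) y = (if xs = [] then 0 else graftmid (butlast xs) (star_t (last xs) y) [])"

fun dot_t :: "tree \<Rightarrow> tree \<Rightarrow> (tree \<Rightarrow>\<^sub>0 'k::comm_semiring_1)" where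
  "dot_t (Node xs) (Node ys) =
     (if xs = [] \<or> ys = [] then 0 else graftmid (butlast xs) (star_t (last xs) (hd ys)) (tl ys))"
| "dot_t _ _ = 0"

fun succ_t :: "tree \<Rightarrow> tree \<Rightarrow> (tree \<Rightarrow>\<^sub>0 'k::comm_semiring_1)" where
  "succ_t x Leaf = 0"
| "succ_t x (Node ys) = (if ys = [] then 0 else graftmid [] (star_t x (hd ys)) (tl ys))"

definition Star :: "(tree \<Rightarrow>\<^sub>0 'k::comm_semiring_1) \<Rightarrow> (tree \<Rightarrow>\<^sub>0 'k) \<Rightarrow> (tree \<Rightarrow>\<^sub>0 'k)" where
  "Star = bilin star_t"

definition Prec :: "(tree \<Rightarrow>\<^sub>0 'k::comm_semiring_1) \<Rightarrow> (tree \<Rightarrow>\<^sub>0 'k) \<Rightarrow> (tree \<Rightarrow>\<^sub>0 'k)" where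
  "Prec = bilin prec_t"

definition Dot :: "(tree \<Rightarrow>\<^sub>0 'k::comm_semiring_1) \<Rightarrow> (tree \<Rightarrow>\<^sub>0 'k) \<Rightarrow> (tree \<Rightarrow>\<^sub>0 'k)" where
  "Dot = bilin dot_t"

definition Succ :: "(tree \<Rightarrow>\<^sub>0 'k::comm_semiring_1) \<Rightarrow> (tree \<Rightarrow>\<^sub>0 'k) \<Rightarrow> (tree \<Rightarrow>\<^sub>0 'k)" where
  "Succ = bilin succ_t"

inductive_set ideal_I :: "(tree \<Rightarrow>\<^sub>0 'k::field) set" where
  gen: "inAplus x \<Longrightarrow> inAplus y \<Longrightarrow> Dot x y \<in> ideal_I"
| zero: "0 \<in> ideal_I"
| add: "a \<in> ideal_I \<Longrightarrow> b \<in> ideal_I \<Longrightarrow> a + b \<in> ideal_I"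
| smult: "a \<in> ideal_I \<Longrightarrow> scale c a \<in> ideal_I"
| prec_l: "a \<in> ideal_I \<Longrightarrow> inA y \<Longrightarrow> Prec a y \<in> ideal_I"
| dot_l: "a \<in> ideal_I \<Longrightarrow> inA y \<Longrightarrow> Dot a y \<in> ideal_I"
| succ_l: "a \<in> ideal_I \<Longrightarrow> inA y \<Longrightarrow> Succ a y \<in> ideal_I"
| prec_r: "a \<in> ideal_I \<Longrightarrow> inA y \<Longrightarrow> Prec y a \<in> ideal_I"
| dot_r: "a \<in> ideal_I \<Longrightarrow> inA y \<Longrightarrow> Dot y a \<in> ideal_I"
| succ_r: "a \<in> ideal_I \<Longrightarrow> inA y \<Longrightarrow> Succ y a \<in> ideal_I"

text \<open>I \<otimes> A + A \<otimes> I, the kernel of the projection A \<otimes> A \<rightarrow> (A/I) \<otimes> (A/I).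
  Two elements of A \<otimes> A have the same image in (A/I) \<otimes> (A/I) iff their difference lies here.\<close>

inductive_set tensor_ideal :: "(tree \<times> tree \<Rightarrow>\<^sub>0 'k::field) set" where
  left: "a \<in> ideal_I \<Longrightarrow> inA y \<Longrightarrow> tens a y \<in> tensor_ideal"
| right: "a \<in> ideal_I \<Longrightarrow> inA y \<Longrightarrow> tens y a \<in> tensor_ideal"
| zero: "0 \<in> tensor_ideal"
| add: "u \<in> tensor_ideal \<Longrightarrow> v \<in> tensor_ideal \<Longrightarrow> u + v \<in> tensor_ideal"
| smult: "u \<in> tensor_ideal \<Longrightarrow> scale c u \<in> tensor_ideal"

text \<open>Vertices/edges are addressed by paths from the root: the path [] is the root vertex
  (and the trunk edge below it); the path p @ [i] is the i-th child (0-based, left to right)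
  of the vertex at p, and also denotes the edge joining that child to its parent.\<close>

fun valid_pos :: "tree \<Rightarrow> nat list \<Rightarrow> bool" where
  "valid_pos t [] = True"
| "valid_pos Leaf (i # p) = False"
| "valid_pos (Node ts) (i # p) = (i < length ts \<and> valid_pos (ts ! i) p)"

fun subtree_at :: "tree \<Rightarrow> nat list \<Rightarrow> tree" where
  "subtree_at t [] = t"
| "subtree_at Leaf (i # p) = Leaf"
| "subtree_at (Node ts) (i # p) = subtree_at (ts ! i) p"

text \<open>Internal edges: edges joining two internal vertices, i.e. edges into a non-root internal vertex.\<close>
definition internal_edges :: "tree \<Rightarrow> nat list set" where
  "internal_edges t = {p. p \<noteq> [] \<and> valid_pos t p \<and> subtree_at t p \<noteq> Leaf}"

text \<open>Leaf positions (the leaves of t); the root-to-leaf path of the leaf at l meets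
  the edge p iff p is a prefix of l.\<close>
definition leaf_positions :: "tree \<Rightarrow> nat list set" where
  "leaf_positions t = {l. valid_pos t l \<and> subtree_at t l = Leaf}"

text \<open>Admissible cuts other than the total cut: sets of internal edges (the empty set being the
  empty cut) such that every root-to-leaf path meets at most one chosen edge.\<close>
definition admissible_cut :: "tree \<Rightarrow> nat list set \<Rightarrow> bool" where
  "admissible_cut t C \<longleftrightarrow> C \<subseteq> internal_edges t \<and>
     (\<forall>l\<in>leaf_positions t. card {p\<in>C. prefix p l} \<le> 1)"

lemma set_zip_upt_size:
  "(i, s::tree) \<in> set (zip [0..<length ts] ts) \<Longrightarrow> size s < Suc (size_list size ts)"
  by (auto dest: set_zip_rightD size_mem_list)

text \<open>P^C(t): the component containing the root (cut subtrees replaced by leaves).\<close>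
function prune :: "nat list set \<Rightarrow> nat list \<Rightarrow> tree \<Rightarrow> tree" where
  "prune C p t = (if p \<in> C then Leaf else
     (case t of Leaf \<Rightarrow> Leaf
      | Node ts \<Rightarrow> Node (map (\<lambda>(i, s). prune C (p @ [i]) s) (zip [0..<length ts] ts))))"
  by pat_completeness auto
termination
  by (relation "measure (\<lambda>(C, p, t). size t)") (auto dest: set_zip_upt_size)

function cutoffs :: "nat list set \<Rightarrow> nat list \<Rightarrow> tree \<Rightarrow> tree list" where
  "cutoffs C p t = (if p \<in> C then [t] else
     (case t of Leaf \<Rightarrow> []
      | Node ts \<Rightarrow> concat (map (\<lambda>(i, s). cutoffs C (p @ [i]) s) (zip [0..<length ts] ts))))"
  by pat_completeness auto
termination
  by (relation "measure (\<lambda>(C, p, t). size t)") (auto dest: set_zip_upt_size)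

definition P_cut :: "tree \<Rightarrow> nat list set \<Rightarrow> tree" where
  "P_cut t C = prune C [] t"

definition G_cut :: "tree \<Rightarrow> nat list set \<Rightarrow> (tree \<Rightarrow>\<^sub>0 'k::comm_semiring_1)" where
  "G_cut t C = foldr (\<lambda>s v. Star (vec s) v) (cutoffs C [] t) (vec Leaf)"

definition Delta :: "tree \<Rightarrow> (tree \<times> tree \<Rightarrow>\<^sub>0 'k::comm_semiring_1)" where
  "Delta t = (if t = Leaf then tens (vec Leaf) (vec Leaf) else
     (\<Sum>C\<in>{C. admissible_cut t C}. tens (G_cut t C) (vec (P_cut t C)))
     + tens (vec t) (vec Leaf))"

text \<open>DLR t is a representative in A \<otimes> A of \<Delta>_LR(t) \<in> (A/I) \<otimes> (A/I): its image under the
  projection is \<Delta>_LR(t), since * descends to A/I.\<close>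

fun DLR :: "tree \<Rightarrow> (tree \<times> tree \<Rightarrow>\<^sub>0 'k::comm_semiring_1)" where
  "DLR Leaf = tens (vec Leaf) (vec Leaf)"
| "DLR (Node [t1, t2]) =
     (\<Sum>(x, s)\<in>Poly_Mapping.keys (DLR t1). \<Sum>(z, r)\<in>Poly_Mapping.keys (DLR t2).
        scale (Poly_Mapping.lookup (DLR t1) (x, s) * Poly_Mapping.lookup (DLR t2) (z, r))
          (tens (Star (vec x) (vec z)) (vec (Node [s, r]))))
     + tens (vec (Node [t1, t2])) (vec Leaf)"
| "DLR (Node _) = 0"

end

theory Submission
  imports Defs
begin

text \<open>For t = t1 \<or> t2 the admissible cuts of t other than the total cut correspond bijectively
  to pairs of cuts of t1 and t2, where a cut of a subtree ti \<noteq> | may now also be total (cutting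
  the edge that joins ti to the root).  The pruned tree of such a pair is P1 \<or> P2, and its
  cut-off trees are those of t1 followed by those of t2, so by associativity of * its G-part is
  G1 * G2.  Hence \<Delta> satisfies the Loday--Ronco recursion already in A \<otimes> A, with * computed
  in A: \<Delta> t coincides with the representative DLR t, and the difference in the theorem is 0.
  Associativity of * follows from the seven tridendriform relations between \<prec>, \<cdot> and \<succ>,
  proved on basis trees by induction on the total size of the three trees.\<close>

type_synonym 'k span = "tree \<Rightarrow>\<^sub>0 'k"
type_synonym 'k tensor = "tree \<times> tree \<Rightarrow>\<^sub>0 'k"

lemma lookup_scale [simp]: "Poly_Mapping.lookup (scale c v) x = c * Poly_Mapping.lookup v x"
  unfolding scale_def by transfer (simp add: when_def)

lemma scale_zero_left [simp]: "scale 0 v = 0"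
  by (rule poly_mapping_eqI) simp

lemma scale_zero_right [simp]: "scale c 0 = 0"
  by (rule poly_mapping_eqI) simp

lemma scale_one [simp]: "scale (1::'k::comm_semiring_1) v = v"
  by (rule poly_mapping_eqI) simp

lemma scale_add_right: "scale c (u + v) = scale c u + scale c v"
  by (rule poly_mapping_eqI) (simp add: lookup_add distrib_left)

lemma scale_add_left: "scale (c + d) u = scale c u + scale d u"
  by (rule poly_mapping_eqI) (simp add: lookup_add distrib_right)

lemma scale_scale [simp]: "scale c (scale d u) = scale (c * d) u"
  by (rule poly_mapping_eqI) (simp add: mult.assoc)

lemma scale_sum: "scale c (sum f A) = (\<Sum>a\<in>A. scale c (f a))"
  by (rule poly_mapping_eqI) (simp add: lookup_sum sum_distrib_left)

lemma scale_single: "scale c (Poly_Mapping.single a d) = Poly_Mapping.single a (c * d)"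
  by (rule poly_mapping_eqI) (simp add: lookup_single when_def)

definition lin :: "('a \<Rightarrow> ('b \<Rightarrow>\<^sub>0 'k::comm_semiring_1)) \<Rightarrow> ('a \<Rightarrow>\<^sub>0 'k) \<Rightarrow> ('b \<Rightarrow>\<^sub>0 'k)" where
  "lin f v = (\<Sum>a\<in>Poly_Mapping.keys v. scale (Poly_Mapping.lookup v a) (f a))"

lemma lin_eq_sum_superset:
  assumes "finite S" "Poly_Mapping.keys v \<subseteq> S"
  shows "lin f v = (\<Sum>a\<in>S. scale (Poly_Mapping.lookup v a) (f a))"
  unfolding lin_def by (rule sum.mono_neutral_left) (use assms in \<open>auto simp: in_keys_iff\<close>)

lemma lin_zero [simp]: "lin f 0 = 0"
  by (simp add: lin_def)

lemma lin_add: "lin f (u + v) = lin f u + lin f v"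
proof -
  let ?S = "Poly_Mapping.keys u \<union> Poly_Mapping.keys v"
  have "lin f (u + v) = (\<Sum>a\<in>?S. scale (Poly_Mapping.lookup (u + v) a) (f a))"
    by (rule lin_eq_sum_superset) (simp_all add: keys_add)
  also have "\<dots> = (\<Sum>a\<in>?S. scale (Poly_Mapping.lookup u a) (f a))
      + (\<Sum>a\<in>?S. scale (Poly_Mapping.lookup v a) (f a))"
    unfolding lookup_add scale_add_left sum.distrib ..
  also have "\<dots> = lin f u + lin f v"
    by (simp add: lin_eq_sum_superset[of ?S u] lin_eq_sum_superset[of ?S v])
  finally show ?thesis .
qed

lemma lin_sum: "lin f (sum u I) = (\<Sum>i\<in>I. lin f (u i))"
  by (induct I rule: infinite_finite_induct) (auto simp: lin_add)

lemma lin_scale: "lin f (scale c u) = scale c (lin f u)"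
proof -
  have "lin f (scale c u) = (\<Sum>a\<in>Poly_Mapping.keys u. scale (Poly_Mapping.lookup (scale c u) a) (f a))"
    by (rule lin_eq_sum_superset) (auto simp: in_keys_iff)
  then show ?thesis by (simp add: lin_def scale_sum)
qed

lemma lin_single: "lin f (Poly_Mapping.single a c) = scale c (f a)"
  by (subst lin_eq_sum_superset[of "{a}"]) auto

lemma lin_vec [simp]: "lin f (vec a) = f a"
  by (rule poly_mapping_eqI) (simp add: vec_def lin_single)

lemma lin_cong: "(\<And>a. a \<in> Poly_Mapping.keys v \<Longrightarrow> f a = g a) \<Longrightarrow> lin f v = lin g v"
  unfolding lin_def by (rule sum.cong) auto

lemma lin_fun_zero [simp]: "lin (\<lambda>a. 0) v = 0"
  by (simp add: lin_def)

lemma lin_fun_add: "lin (\<lambda>a. f a + g a) v = lin f v + lin g v"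
  by (simp add: lin_def scale_add_right sum.distrib)

lemma lin_fun_sum: "lin (\<lambda>a. \<Sum>i\<in>I. f i a) v = (\<Sum>i\<in>I. lin (f i) v)"
  by (induct I rule: infinite_finite_induct) (auto simp: lin_fun_add)

lemma lin_lin: "lin g (lin f v) = lin (\<lambda>a. lin g (f a)) v"
  by (simp add: lin_def[of f v] lin_sum lin_scale) (simp add: lin_def)

lemma lin_single_id [simp]: "lin (\<lambda>a. Poly_Mapping.single a 1) v = v"
proof (rule poly_mapping_eqI)
  fix b
  have "Poly_Mapping.lookup (lin (\<lambda>a. Poly_Mapping.single a 1) v) b
      = (\<Sum>a\<in>Poly_Mapping.keys v. if a = b then Poly_Mapping.lookup v a else 0)"
    unfolding lin_def lookup_sum by (rule sum.cong) (auto simp: lookup_single)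
  also have "\<dots> = Poly_Mapping.lookup v b"
    by (simp add: in_keys_iff)
  finally show "Poly_Mapping.lookup (lin (\<lambda>a. Poly_Mapping.single a 1) v) b = Poly_Mapping.lookup v b" .
qed

lemma lin_vec_id [simp]: "lin vec v = v"
  by (simp add: vec_def[abs_def])

lemma lin_swap: "lin (\<lambda>a. lin (h a) w) v = lin (\<lambda>b. lin (\<lambda>a. h a b) v) w"
  unfolding lin_def scale_sum by (subst sum.swap) (simp add: mult.commute)

lemma bilin_eq_lin: "bilin f x y = lin (\<lambda>s. lin (f s) y) x"
  by (simp add: bilin_def lin_def scale_sum)

lemma graftmid_eq_lin: "graftmid P v Q = lin (\<lambda>c. vec (Node (P @ c # Q))) v"
  by (simp add: graftmid_def lin_def vec_def scale_single)

lemma tens_eq_lin: "tens x y = lin (\<lambda>s. lin (\<lambda>r. Poly_Mapping.single (s, r) 1) y) x"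
  by (simp add: tens_def lin_def scale_sum scale_single)

lemma lin_graftmid: "lin g (graftmid P v Q) = lin (\<lambda>c. g (Node (P @ c # Q))) v"
  by (simp add: graftmid_eq_lin lin_lin)

lemma graftmid_lin: "lin (\<lambda>c. graftmid P (f c) Q) v = graftmid P (lin f v) Q"
  by (simp add: graftmid_eq_lin lin_lin)

lemma lin_graftmid_swap:
  "lin (\<lambda>c. graftmid (P @ c # M) v Q) u = lin (\<lambda>d. graftmid P u (M @ d # Q)) v"
  unfolding graftmid_eq_lin by (subst lin_swap) simp

section \<open>Associativity of the total product\<close>

lemma bilin_vec_left [simp]: "bilin f (vec a) w = lin (f a) w"
  by (simp add: bilin_eq_lin)

lemma bilin_vec_right [simp]: "bilin f v (vec b) = lin (\<lambda>a. f a b) v"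
  by (simp add: bilin_eq_lin)

lemma Star_vec_vec [simp]: "Star (vec a) (vec b) = star_t a b"
  by (simp add: Star_def)

lemma Star_zero_left [simp]: "Star 0 w = 0"
  by (simp add: Star_def bilin_def)

lemma Star_zero_right [simp]: "Star v 0 = 0"
  by (simp add: Star_def bilin_def)

lemma Star_Leaf_left [simp]: "Star (vec Leaf) w = w"
proof -
  have "lin (star_t Leaf) w = lin vec w" by (rule lin_cong) simp
  then show ?thesis by (simp add: Star_def)
qed

lemma star_t_Leaf_right [simp]: "star_t u Leaf = vec u"
  by (cases u) simp_all

lemma Star_Leaf_right [simp]: "Star v (vec Leaf) = v"
  by (simp add: Star_def)

lemma tridend_add_left:
  "Prec (u + v) w = Prec u w + Prec v w"
  "Dot (u + v) w = Dot u w + Dot v w"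
  "Succ (u + v) w = Succ u w + Succ v w"
  by (simp_all add: Prec_def Dot_def Succ_def bilin_eq_lin lin_add)

lemma tridend_add_right:
  "Prec u (v + w) = Prec u v + Prec u w"
  "Dot u (v + w) = Dot u v + Dot u w"
  "Succ u (v + w) = Succ u v + Succ u w"
  by (simp_all add: Prec_def Dot_def Succ_def bilin_eq_lin lin_add lin_fun_add)

text \<open>The product star_t is defined on the whole datatype, but the splitting
  * = \<prec> + \<cdot> + \<succ> fails when a factor is | or the degenerate tree Node [].\<close>

definition supported_on_nodes :: "(tree \<Rightarrow>\<^sub>0 'k::zero) \<Rightarrow> bool" where
  "supported_on_nodes v \<longleftrightarrow> (\<forall>u\<in>Poly_Mapping.keys v. \<exists>ts. u = Node ts \<and> ts \<noteq> [])"

lemma supported_on_nodes_vec: "ts \<noteq> [] \<Longrightarrow> supported_on_nodes (vec (Node ts))"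
  by (simp add: supported_on_nodes_def vec_def)

lemma supported_on_nodes_graftmid: "supported_on_nodes (graftmid P v Q)"
proof -
  have "Poly_Mapping.keys (graftmid P v Q)
      \<subseteq> (\<Union>c\<in>Poly_Mapping.keys v.
          Poly_Mapping.keys (Poly_Mapping.single (Node (P @ c # Q)) (Poly_Mapping.lookup v c)))"
    unfolding graftmid_def by (rule keys_sum)
  then show ?thesis
    unfolding supported_on_nodes_def by (fastforce split: if_splits)
qed

lemma supported_on_nodes_add:
  "supported_on_nodes u \<Longrightarrow> supported_on_nodes v \<Longrightarrow> supported_on_nodes (u + v)"
  unfolding supported_on_nodes_def using keys_add[of u v] by blast

lemma supported_on_nodes_star_t: "supported_on_nodes (star_t (Node xs) (Node ys))"
  by (simp add: supported_on_nodes_add supported_on_nodes_graftmid)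
    (simp add: supported_on_nodes_def)

lemma star_t_Node_Nil [simp]:
  "star_t (Node []) (Node ys) = 0" "star_t (Node xs) (Node []) = 0"
  by simp_all

lemma Star_split:
  assumes "supported_on_nodes v" "supported_on_nodes w"
  shows "Star v w = Prec v w + Dot v w + Succ v w"
proof -
  have split_basis: "star_t s r = prec_t s r + dot_t s r + succ_t s r"
    if "s \<in> Poly_Mapping.keys v" "r \<in> Poly_Mapping.keys w" for s r
    using assms that unfolding supported_on_nodes_def by fastforce
  then have "Star v w = lin (\<lambda>s. lin (\<lambda>r. prec_t s r + dot_t s r + succ_t s r) w) v"
    unfolding Star_def bilin_eq_lin by (intro lin_cong) (rule split_basis)
  then show ?thesis
    by (simp add: Prec_def Dot_def Succ_def bilin_eq_lin lin_fun_add)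
qed

lemma Star_Node_Nil_left: "supported_on_nodes w \<Longrightarrow> Star (vec (Node [])) w = 0"
proof -
  assume "supported_on_nodes w"
  then have "lin (star_t (Node [])) w = lin (\<lambda>_. 0) w"
    by (intro lin_cong) (auto simp: supported_on_nodes_def)
  then show ?thesis by (simp add: Star_def)
qed

lemma Star_Node_Nil_right: "supported_on_nodes v \<Longrightarrow> Star v (vec (Node [])) = 0"
proof -
  assume "supported_on_nodes v"
  then have "lin (\<lambda>a. star_t a (Node [])) v = lin (\<lambda>_. 0) v"
    by (intro lin_cong) (auto simp: supported_on_nodes_def)
  then show ?thesis by (simp add: Star_def)
qed

lemma Star_assoc_if_tridendriform:
  fixes x y z :: "'k::comm_semiring_1 span"
  assumes "supported_on_nodes x" "supported_on_nodes y" "supported_on_nodes z"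
    and "supported_on_nodes (Star x y)" "supported_on_nodes (Star y z)"
    and "Prec (Prec x y) z = Prec x (Star y z)"
    and "Prec (Succ x y) z = Succ x (Prec y z)"
    and "Succ (Star x y) z = Succ x (Succ y z)"
    and "Dot (Succ x y) z = Succ x (Dot y z)"
    and "Dot (Prec x y) z = Dot x (Succ y z)"
    and "Prec (Dot x y) z = Dot x (Prec y z)"
    and "Dot (Dot x y) z = Dot x (Dot y z)"
  shows "Star (Star x y) z = Star x (Star y z)"
proof -
  note split = Star_split[OF assms(1,2)] Star_split[OF assms(2,3)]
    Star_split[OF assms(4,3)] Star_split[OF assms(1,5)]
  have "Star (Star x y) z = Prec (Star x y) z + Dot (Star x y) z + Succ (Star x y) z"
    by (fact split(3))
  also have "\<dots> = Prec (Prec x y) z + Prec (Dot x y) z + Prec (Succ x y) z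
      + (Dot (Prec x y) z + Dot (Dot x y) z + Dot (Succ x y) z) + Succ (Star x y) z"
    by (simp only: split(1) tridend_add_left)
  also have "\<dots> = Prec x (Star y z) + Dot x (Prec y z) + Succ x (Prec y z)
      + (Dot x (Succ y z) + Dot x (Dot y z) + Succ x (Dot y z)) + Succ x (Succ y z)"
    by (simp only: assms(6-))
  also have "\<dots> = Prec x (Star y z) + Dot x (Star y z) + Succ x (Star y z)"
    by (simp only: split(2) tridend_add_right ac_simps)
  also have "\<dots> = Star x (Star y z)"
    by (fact split(4)[symmetric])
  finally show ?thesis .
qed

lemmas tridend_defs = Star_def Prec_def Dot_def Succ_def

lemmas lin_graftmid_simps =
  lin_graftmid graftmid_lin lin_graftmid_swap lin_graftmid_swap[of "[]", simplified] butlast_append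

lemma prec_t_Node_snoc: "prec_t (Node (X @ [xk])) = (\<lambda>v. graftmid X (star_t xk v) [])"
  by (rule ext) simp

text \<open>The seven tridendriform relations on basis trees; each needs associativity only for
  smaller trees.\<close>

lemma Prec_Prec_vec:
  assumes "x = Node (X @ [xk])"
    and "Star (Star (vec xk) (vec y)) (vec z)
      = (Star (vec xk) (Star (vec y) (vec z)) :: 'k::comm_semiring_1 span)"
  shows "Prec (Prec (vec x) (vec y)) (vec z) = (Prec (vec x) (Star (vec y) (vec z)) :: 'k span)"
  using assms by (simp add: tridend_defs prec_t_Node_snoc lin_graftmid_simps)

lemma Prec_Succ_vec:
  assumes "y = Node (y0 # Y)"
    and "Star (Star (vec x) (vec y0)) (vec z)
      = (Star (vec x) (Star (vec y0) (vec z)) :: 'k::comm_semiring_1 span)"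
  shows "Prec (Succ (vec x) (vec y)) (vec z) = (Succ (vec x) (Prec (vec y) (vec z)) :: 'k span)"
  using assms by (cases Y rule: rev_exhaust) (simp_all add: tridend_defs lin_graftmid_simps)

lemma Succ_Star_vec:
  assumes "z = Node (z0 # Z)"
    and "Star (Star (vec x) (vec y)) (vec z0)
      = (Star (vec x) (Star (vec y) (vec z0)) :: 'k::comm_semiring_1 span)"
  shows "Succ (Star (vec x) (vec y)) (vec z) = (Succ (vec x) (Succ (vec y) (vec z)) :: 'k span)"
  using assms by (simp add: tridend_defs prec_t_Node_snoc lin_graftmid_simps)

lemma Dot_Succ_vec:
  assumes "y = Node (y0 # Y)" "z = Node (z0 # Z)"
    and "Star (Star (vec x) (vec y0)) (vec z0)
      = (Star (vec x) (Star (vec y0) (vec z0)) :: 'k::comm_semiring_1 span)"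
  shows "Dot (Succ (vec x) (vec y)) (vec z) = (Succ (vec x) (Dot (vec y) (vec z)) :: 'k span)"
  using assms by (cases Y rule: rev_exhaust) (simp_all add: tridend_defs lin_graftmid_simps)

lemma Dot_Prec_vec:
  assumes "x = Node (X @ [xk])" "z = Node (z0 # Z)"
    and "Star (Star (vec xk) (vec y)) (vec z0)
      = (Star (vec xk) (Star (vec y) (vec z0)) :: 'k::comm_semiring_1 span)"
  shows "Dot (Prec (vec x) (vec y)) (vec z) = (Dot (vec x) (Succ (vec y) (vec z)) :: 'k span)"
  using assms by (simp add: tridend_defs prec_t_Node_snoc lin_graftmid_simps)

lemma Prec_Dot_vec:
  assumes "x = Node (X @ [xk])" "y = Node (y0 # Y)"
    and "Star (Star (vec xk) (vec y0)) (vec z)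
      = (Star (vec xk) (Star (vec y0) (vec z)) :: 'k::comm_semiring_1 span)"
  shows "Prec (Dot (vec x) (vec y)) (vec z) = (Dot (vec x) (Prec (vec y) (vec z)) :: 'k span)"
  using assms by (cases Y rule: rev_exhaust) (simp_all add: tridend_defs lin_graftmid_simps)

lemma Dot_Dot_vec:
  assumes "x = Node (X @ [xk])" "y = Node (y0 # Y)" "z = Node (z0 # Z)"
    and "Star (Star (vec xk) (vec y0)) (vec z0)
      = (Star (vec xk) (Star (vec y0) (vec z0)) :: 'k::comm_semiring_1 span)"
  shows "Dot (Dot (vec x) (vec y)) (vec z) = (Dot (vec x) (Dot (vec y) (vec z)) :: 'k span)"
  using assms by (cases Y rule: rev_exhaust) (simp_all add: tridend_defs lin_graftmid_simps)

lemma Star_assoc_vec: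
  "Star (Star (vec a) (vec b)) (vec c) = (Star (vec a) (Star (vec b) (vec c)) :: 'k::comm_semiring_1 span)"
proof (induction "size a + size b + size c" arbitrary: a b c rule: less_induct)
  case less
  consider (leaf) "a = Leaf \<or> b = Leaf \<or> c = Leaf"
    | (nil) as bs cs where "a = Node as" "b = Node bs" "c = Node cs" "as = [] \<or> bs = [] \<or> cs = []"
    | (nodes) X xk y0 Y z0 Z where "a = Node (X @ [xk])" "b = Node (y0 # Y)" "c = Node (z0 # Z)"
    by (metis tree.exhaust rev_exhaust neq_Nil_conv)
  then show ?case
  proof cases
    case leaf
    then show ?thesis by auto
  next
    case nil
    then show ?thesis
      by (auto simp del: star_t.simps(3)
          simp: Star_Node_Nil_left Star_Node_Nil_right supported_on_nodes_star_t)
  next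
    case nodes
    have sizes: "size xk < size a" "size y0 < size b" "size z0 < size c"
      using nodes by (simp_all add: size_mem_Node)
    have support: "supported_on_nodes (vec a)" "supported_on_nodes (vec b)" "supported_on_nodes (vec c)"
      "supported_on_nodes (Star (vec a) (vec b))" "supported_on_nodes (Star (vec b) (vec c))"
      using nodes by (simp_all del: star_t.simps(3) add: supported_on_nodes_vec supported_on_nodes_star_t)
    show ?thesis
      by (rule Star_assoc_if_tridendriform[OF support
            Prec_Prec_vec[OF nodes(1) less] Prec_Succ_vec[OF nodes(2) less]
            Succ_Star_vec[OF nodes(3) less] Dot_Succ_vec[OF nodes(2,3) less]
            Dot_Prec_vec[OF nodes(1,3) less] Prec_Dot_vec[OF nodes(1,2) less]
            Dot_Dot_vec[OF nodes less]])
        (use sizes in simp_all)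
  qed
qed

lemma Star_assoc: "Star (Star u v) w = (Star u (Star v w) :: 'k::comm_semiring_1 span)"
proof -
  have basis: "lin (\<lambda>s. star_t s c) (star_t a b) = (lin (star_t a) (star_t b c) :: 'k span)" for a b c
    using Star_assoc_vec[of a b c, where 'k = 'k] by (simp add: Star_def)
  have "Star (Star u v) w
      = lin (\<lambda>a. lin (\<lambda>b. lin (\<lambda>c. lin (\<lambda>s. star_t s c) (star_t a b)) w) v) u"
    unfolding Star_def bilin_eq_lin lin_lin by (subst lin_swap) (rule refl)
  also have "\<dots> = Star u (Star v w)"
    unfolding basis Star_def bilin_eq_lin lin_lin ..
  finally show ?thesis .
qed

section \<open>Admissible cuts of a grafting\<close>

lemma finite_prefixes: "finite {p. prefix p l}"
  by (metis List.finite_set set_prefixes_eq)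

lemma finite_prefixes_in: "finite {p \<in> C. prefix p l}"
  by (rule finite_subset[OF _ finite_prefixes]) auto

lemma finite_valid_pos: "finite {p. valid_pos t p}"
proof (induction t)
  case Leaf
  have "{p. valid_pos Leaf p} = {[]}"
    by (auto elim: valid_pos.elims)
  then show ?case by simp
next
  case (Node ts)
  have "{p. valid_pos (Node ts) p} \<subseteq> {[]} \<union> (\<Union>i<length ts. Cons i ` {p. valid_pos (ts ! i) p})"
  proof
    fix p
    assume "p \<in> {p. valid_pos (Node ts) p}"
    then show "p \<in> {[]} \<union> (\<Union>i<length ts. Cons i ` {p. valid_pos (ts ! i) p})"
      by (cases p) auto
  qed
  then show ?case
    by (rule finite_subset) (use Node in auto)
qed

lemma finite_admissible_cuts: "finite {C. admissible_cut t C}"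
proof -
  have "finite (internal_edges t)"
    unfolding internal_edges_def by (rule finite_subset[OF _ finite_valid_pos]) auto
  then show ?thesis
    unfolding admissible_cut_def by (rule finite_subset[rotated, OF finite_Pow_iff[THEN iffD2]]) auto
qed

lemma Nil_notin_admissible_cut: "admissible_cut t C \<Longrightarrow> [] \<notin> C"
  unfolding admissible_cut_def internal_edges_def by auto

text \<open>The admissible cuts together with the total cut, which is encoded as the cut {[]} of the
  trunk (P_cut then gives | and G_cut gives t).  For t = | the total cut is the empty one, as
  \<Delta> | = | \<otimes> | has a single term.\<close>

definition cuts :: "tree \<Rightarrow> nat list set set" where
  "cuts t = (if t = Leaf then {C. admissible_cut t C} else insert {[]} {C. admissible_cut t C})"

lemma admissible_cut_in_cuts: "admissible_cut t C \<Longrightarrow> C \<in> cuts t"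
  by (cases "t = Leaf") (simp_all add: cuts_def)

lemma cuts_Cons_internal_edge:
  assumes "C \<in> cuts (ts ! i)" "i < length ts" "q \<in> C"
  shows "i # q \<in> internal_edges (Node ts)"
  using assms by (auto simp: cuts_def admissible_cut_def internal_edges_def split: if_splits)

lemma Delta_eq_sum_cuts:
  "(Delta t :: 'k::comm_semiring_1 tensor) = (\<Sum>C\<in>cuts t. tens (G_cut t C) (vec (P_cut t C)))"
proof (cases "t = Leaf")
  case True
  have "internal_edges Leaf = {}"
    unfolding internal_edges_def by (auto elim: valid_pos.elims)
  then have "cuts Leaf = {{}}"
    by (auto simp: cuts_def admissible_cut_def)
  moreover have "cutoffs {} [] Leaf = []" "prune {} [] Leaf = Leaf"
    by (subst cutoffs.simps prune.simps; simp)+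
  ultimately show ?thesis
    using True by (simp add: Delta_def G_cut_def P_cut_def del: cutoffs.simps prune.simps)
next
  case False
  have "cutoffs {[]} [] t = [t]" "prune {[]} [] t = Leaf"
    by (subst cutoffs.simps prune.simps; simp)+
  then have "(G_cut t {[]} :: 'k span) = vec t" "P_cut t {[]} = Leaf"
    by (simp_all add: G_cut_def P_cut_def del: cutoffs.simps prune.simps)
  moreover have "{[]} \<notin> {C. admissible_cut t C}"
    using Nil_notin_admissible_cut by blast
  ultimately show ?thesis
    using False finite_admissible_cuts[of t] by (simp add: Delta_def cuts_def add.commute)
qed

definition subcut :: "nat \<Rightarrow> nat list set \<Rightarrow> nat list set" where
  "subcut i C = {q. i # q \<in> C}"

definition graft_cut :: "nat list set \<Rightarrow> nat list set \<Rightarrow> nat list set" where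
  "graft_cut C1 C2 = Cons 0 ` C1 \<union> Cons 1 ` C2"

lemma subcut_graft_cut: "i < 2 \<Longrightarrow> subcut i (graft_cut C1 C2) = [C1, C2] ! i"
  by (auto simp: subcut_def graft_cut_def less_2_cases_iff)

lemma Nil_notin_graft_cut: "[] \<notin> graft_cut C1 C2"
  by (auto simp: graft_cut_def)

lemma graft_cut_subcut:
  assumes "admissible_cut (Node [t1, t2]) C"
  shows "graft_cut (subcut 0 C) (subcut 1 C) = C"
proof -
  have "\<exists>i q. p = i # q \<and> i < 2" if "p \<in> C" for p
    using assms that unfolding admissible_cut_def internal_edges_def
    by (cases p) auto
  then show ?thesis
    unfolding graft_cut_def subcut_def by (auto simp: less_2_cases_iff)
qed

lemma cuts_card_prefixes:
  assumes "C \<in> cuts t" "l \<in> leaf_positions t"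
  shows "card {q \<in> C. prefix q l} \<le> 1"
proof (cases "admissible_cut t C")
  case True
  then show ?thesis using assms(2) by (simp add: admissible_cut_def)
next
  case False
  then have "C = {[]}" using assms(1) by (simp add: cuts_def split: if_splits)
  then show ?thesis by (simp add: card_le_Suc0_iff_eq)
qed

lemma card_prefixes_Cons:
  assumes "[] \<notin> C"
  shows "card {p \<in> C. prefix p (i # l)} = card {q \<in> subcut i C. prefix q l}"
proof -
  have "{p \<in> C. prefix p (i # l)} = Cons i ` {q \<in> subcut i C. prefix q l}"
    using assms by (auto simp: subcut_def image_iff prefix_Cons)
  then show ?thesis
    by (simp add: card_image)
qed

lemma wf_tree_leaf_below:
  "wf_tree s \<Longrightarrow> valid_pos s q \<Longrightarrow> \<exists>l. prefix q l \<and> l \<in> leaf_positions s"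
proof (induction s arbitrary: q)
  case Leaf
  then have "q = []" by (cases q) auto
  then show ?case by (intro exI[of _ "[]"]) (simp add: leaf_positions_def)
next
  case (Node ts)
  obtain i q' where iq: "i < length ts" "valid_pos (ts ! i) q'" "prefix q (i # q')"
  proof (cases q)
    case Nil
    then show ?thesis using Node.prems(1) that[of 0 "[]"] by (cases ts) auto
  next
    case (Cons i q')
    then show ?thesis using Node.prems(2) that[of i q'] by simp
  qed
  then obtain l where "prefix q' l" "l \<in> leaf_positions (ts ! i)"
    using Node.IH[of "ts ! i" q'] Node.prems(1) by (auto simp: list_all_length)
  then show ?case
    using iq by (intro exI[of _ "i # l"]) (auto simp: leaf_positions_def intro: prefix_order.trans)
qed

lemma subcut_in_cuts:
  assumes wf: "list_all wf_tree ts" and i: "i < length ts" and C: "admissible_cut (Node ts) C"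
  shows "subcut i C \<in> cuts (ts ! i)"
proof -
  have edge: "i # q \<in> internal_edges (Node ts)" if "q \<in> subcut i C" for q
    using C that unfolding admissible_cut_def subcut_def by auto
  have card: "card {q \<in> subcut i C. prefix q l} \<le> 1" if "l \<in> leaf_positions (ts ! i)" for l
  proof -
    have "i # l \<in> leaf_positions (Node ts)"
      using that i by (simp add: leaf_positions_def)
    then show ?thesis
      using C card_prefixes_Cons[OF Nil_notin_admissible_cut[OF C]]
      unfolding admissible_cut_def by metis
  qed
  show ?thesis
  proof (cases "[] \<in> subcut i C")
    case True
    have "subcut i C = {[]}"
    proof (rule ccontr)
      assume "subcut i C \<noteq> {[]}"
      then obtain q where q: "q \<in> subcut i C" "q \<noteq> []"
        using True by blast
      then have "valid_pos (ts ! i) q"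
        using edge by (simp add: internal_edges_def)
      then obtain l where l: "prefix q l" "l \<in> leaf_positions (ts ! i)"
        using wf_tree_leaf_below wf i by (metis list_all_length)
      then have "{[], q} \<subseteq> {q \<in> subcut i C. prefix q l}"
        using True q by auto
      then have "card {[], q} \<le> card {q \<in> subcut i C. prefix q l}"
        by (intro card_mono finite_prefixes_in)
      then show False
        using card[OF l(2)] q(2) by simp
    qed
    moreover have "ts ! i \<noteq> Leaf"
      using edge[OF True] by (simp add: internal_edges_def)
    ultimately show ?thesis
      by (simp add: cuts_def)
  next
    case False
    have "admissible_cut (ts ! i) (subcut i C)"
      unfolding admissible_cut_def using edge False card
      by (auto simp: internal_edges_def)
    then show ?thesis
      by (rule admissible_cut_in_cuts)
  qed
qed

lemma graft_cut_admissible: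
  assumes "C1 \<in> cuts t1" "C2 \<in> cuts t2"
  shows "admissible_cut (Node [t1, t2]) (graft_cut C1 C2)"
proof -
  have sub: "subcut i (graft_cut C1 C2) \<in> cuts ([t1, t2] ! i)" if "i < 2" for i
    using assms that by (auto simp: subcut_graft_cut less_2_cases_iff)
  show ?thesis
    unfolding admissible_cut_def
  proof (intro conjI ballI subsetI)
    fix p
    assume "p \<in> graft_cut C1 C2"
    then obtain i q where p: "p = i # q" "i < 2" "q \<in> subcut i (graft_cut C1 C2)"
      by (auto simp: graft_cut_def subcut_def)
    then show "p \<in> internal_edges (Node [t1, t2])"
      using cuts_Cons_internal_edge[OF sub[OF p(2)]] by simp
  next
    fix l
    assume "l \<in> leaf_positions (Node [t1, t2])"
    then obtain i l' where l: "l = i # l'" "i < 2" "l' \<in> leaf_positions ([t1, t2] ! i)"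
      by (cases l) (auto simp: leaf_positions_def)
    have "card {p \<in> graft_cut C1 C2. prefix p l} = card {q \<in> subcut i (graft_cut C1 C2). prefix q l'}"
      using l(1) by (simp add: card_prefixes_Cons Nil_notin_graft_cut)
    also have "\<dots> \<le> 1"
      using sub[OF l(2)] l(3) by (rule cuts_card_prefixes)
    finally show "card {p \<in> graft_cut C1 C2. prefix p l} \<le> 1" .
  qed
qed

section \<open>The coproduct of a grafting\<close>

lemma prune_cong:
  "(\<And>q. p @ q \<in> C \<longleftrightarrow> p' @ q \<in> C') \<Longrightarrow> prune C p s = prune C' p' s"
proof (induction s arbitrary: p p')
  case Leaf
  then have "p \<in> C \<longleftrightarrow> p' \<in> C'" by (metis append_Nil2)
  then show ?case by (subst (1 2) prune.simps) (simp del: prune.simps)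
next
  case (Node ts)
  have root: "p \<in> C \<longleftrightarrow> p' \<in> C'" using Node.prems[of "[]"] by simp
  have map: "map (\<lambda>(i, s). prune C (p @ [i]) s) (zip [0..<length ts] ts)
      = map (\<lambda>(i, s). prune C' (p' @ [i]) s) (zip [0..<length ts] ts)"
  proof (rule map_cong[OF refl], clarify)
    fix i s
    assume "(i, s) \<in> set (zip [0..<length ts] ts)"
    then show "prune C (p @ [i]) s = prune C' (p' @ [i]) s"
      using Node.prems[of "i # _"] by (intro Node.IH) (auto dest: set_zip_rightD)
  qed
  show ?case
    by (subst (1 2) prune.simps) (simp del: prune.simps add: root map)
qed

lemma cutoffs_cong:
  "(\<And>q. p @ q \<in> C \<longleftrightarrow> p' @ q \<in> C') \<Longrightarrow> cutoffs C p s = cutoffs C' p' s"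
proof (induction s arbitrary: p p')
  case Leaf
  then have "p \<in> C \<longleftrightarrow> p' \<in> C'" by (metis append_Nil2)
  then show ?case by (subst (1 2) cutoffs.simps) (simp del: cutoffs.simps)
next
  case (Node ts)
  have root: "p \<in> C \<longleftrightarrow> p' \<in> C'" using Node.prems[of "[]"] by simp
  have map: "map (\<lambda>(i, s). cutoffs C (p @ [i]) s) (zip [0..<length ts] ts)
      = map (\<lambda>(i, s). cutoffs C' (p' @ [i]) s) (zip [0..<length ts] ts)"
  proof (rule map_cong[OF refl], clarify)
    fix i s
    assume "(i, s) \<in> set (zip [0..<length ts] ts)"
    then show "cutoffs C (p @ [i]) s = cutoffs C' (p' @ [i]) s"
      using Node.prems[of "i # _"] by (intro Node.IH) (auto dest: set_zip_rightD)
  qed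
  show ?case
    by (subst (1 2) cutoffs.simps) (simp del: cutoffs.simps add: root map)
qed

lemma zip_upt_pair: "zip [0..<length [t1, t2]] [t1, t2] = [(0, t1), (1, t2)]"
  by (simp add: upt_rec)

lemma P_cut_graft:
  assumes "[] \<notin> C"
  shows "P_cut (Node [t1, t2]) C = Node [P_cut t1 (subcut 0 C), P_cut t2 (subcut 1 C)]"
proof -
  have "P_cut (Node [t1, t2]) C = Node [prune C [0] t1, prune C [1] t2]"
    unfolding P_cut_def using assms
    by (subst prune.simps) (simp only: zip_upt_pair if_False tree.case list.map prod.case append_Nil)
  also have "prune C [0] t1 = P_cut t1 (subcut 0 C)"
    unfolding P_cut_def subcut_def by (rule prune_cong) simp
  also have "prune C [1] t2 = P_cut t2 (subcut 1 C)"
    unfolding P_cut_def subcut_def by (rule prune_cong) simp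
  finally show ?thesis .
qed

lemma cutoffs_graft:
  assumes "[] \<notin> C"
  shows "cutoffs C [] (Node [t1, t2]) = cutoffs (subcut 0 C) [] t1 @ cutoffs (subcut 1 C) [] t2"
proof -
  have "cutoffs C [] (Node [t1, t2]) = cutoffs C [0] t1 @ cutoffs C [1] t2"
    using assms by (subst cutoffs.simps)
      (simp only: zip_upt_pair if_False tree.case list.map prod.case concat.simps append_Nil2 append_Nil)
  also have "cutoffs C [0] t1 = cutoffs (subcut 0 C) [] t1"
    unfolding subcut_def by (rule cutoffs_cong) simp
  also have "cutoffs C [1] t2 = cutoffs (subcut 1 C) [] t2"
    unfolding subcut_def by (rule cutoffs_cong) simp
  finally show ?thesis .
qed

lemma foldr_Star:
  "foldr (\<lambda>s v. Star (vec s) v) xs w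
    = (Star (foldr (\<lambda>s v. Star (vec s) v) xs (vec Leaf)) w :: 'k::comm_semiring_1 span)"
  by (induction xs) (simp_all add: Star_assoc)

lemma G_cut_graft:
  assumes "[] \<notin> C"
  shows "(G_cut (Node [t1, t2]) C :: 'k::comm_semiring_1 span)
    = Star (G_cut t1 (subcut 0 C)) (G_cut t2 (subcut 1 C))"
  unfolding G_cut_def cutoffs_graft[OF assms] foldr_append by (rule foldr_Star)

lemma bij_betw_graft_cut:
  assumes "list_all wf_tree [t1, t2]"
  shows "bij_betw (\<lambda>(C1, C2). graft_cut C1 C2) (cuts t1 \<times> cuts t2)
    {C. admissible_cut (Node [t1, t2]) C}"
  by (rule bij_betw_byWitness[where f' = "\<lambda>C. (subcut 0 C, subcut 1 C)"])
    (use graft_cut_subcut subcut_in_cuts[OF assms, of 0] subcut_in_cuts[OF assms, of 1] in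
      \<open>auto simp: subcut_graft_cut graft_cut_admissible\<close>)

definition LR_graft :: "'k::comm_semiring_1 tensor \<Rightarrow> 'k tensor \<Rightarrow> 'k tensor" where
  "LR_graft D1 D2 = lin (\<lambda>(x, s). lin (\<lambda>(z, r). tens (star_t x z) (vec (Node [s, r]))) D2) D1"

lemma LR_graft_sum_left: "LR_graft (\<Sum>i\<in>I. D i) D' = (\<Sum>i\<in>I. LR_graft (D i) D')"
  unfolding LR_graft_def by (rule lin_sum)

lemma LR_graft_sum_right: "LR_graft D (\<Sum>i\<in>I. D' i) = (\<Sum>i\<in>I. LR_graft D (D' i))"
  by (simp add: LR_graft_def lin_sum split_def lin_fun_sum)

lemma lin_tens_vec: "lin f (tens u (vec s)) = lin (\<lambda>x. f (x, s)) u"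
  by (simp add: tens_eq_lin lin_lin lin_single)

lemma tens_Star: "tens (Star u v) w = lin (\<lambda>x. lin (\<lambda>z. tens (star_t x z) w) v) u"
  by (simp add: tens_eq_lin Star_def bilin_eq_lin lin_lin)

lemma LR_graft_tens:
  "LR_graft (tens u (vec s)) (tens v (vec r)) = tens (Star u v) (vec (Node [s, r]))"
  unfolding LR_graft_def tens_Star lin_tens_vec by simp

lemma DLR_graft:
  "DLR (Node [t1, t2]) = LR_graft (DLR t1) (DLR t2) + tens (vec (Node [t1, t2])) (vec Leaf)"
  by (simp add: LR_graft_def lin_def scale_sum split_def)

lemma Delta_graft:
  assumes "wf_tree t1" "wf_tree t2"
  shows "(Delta (Node [t1, t2]) :: 'k::comm_semiring_1 tensor)
    = LR_graft (Delta t1) (Delta t2) + tens (vec (Node [t1, t2])) (vec Leaf)"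
proof -
  let ?t = "Node [t1, t2]"
  have "(\<Sum>C\<in>{C. admissible_cut ?t C}. tens (G_cut ?t C) (vec (P_cut ?t C)) :: 'k tensor)
      = (\<Sum>(C1, C2)\<in>cuts t1 \<times> cuts t2.
          tens (G_cut ?t (graft_cut C1 C2)) (vec (P_cut ?t (graft_cut C1 C2))))"
    using bij_betw_graft_cut[of t1 t2] assms
    by (simp add: sum.reindex_bij_betw[symmetric] split_def)
  also have "\<dots> = (\<Sum>C1\<in>cuts t1. \<Sum>C2\<in>cuts t2.
      tens (Star (G_cut t1 C1) (G_cut t2 C2)) (vec (Node [P_cut t1 C1, P_cut t2 C2])))"
    by (simp add: sum.cartesian_product G_cut_graft P_cut_graft subcut_graft_cut Nil_notin_graft_cut)
  also have "\<dots> = LR_graft (Delta t1) (Delta t2)"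
    by (simp add: Delta_eq_sum_cuts LR_graft_sum_left LR_graft_sum_right LR_graft_tens)
      (rule sum.swap)
  finally show ?thesis
    by (simp add: Delta_def)
qed

lemma binary_tree_imp_wf_tree: "binary_tree t \<Longrightarrow> wf_tree t"
  by (induction t) (auto simp: list_all_iff)

lemma Delta_eq_DLR: "binary_tree t \<Longrightarrow> (Delta t :: 'k::comm_semiring_1 tensor) = DLR t"
proof (induction t)
  case Leaf
  then show ?case by (simp add: Delta_def)
next
  case (Node ts)
  then obtain t1 t2 where "ts = [t1, t2]" "binary_tree t1" "binary_tree t2"
    by (auto simp: numeral_2_eq_2 length_Suc_conv)
  then show ?case
    using Node.IH by (simp add: Delta_graft DLR_graft binary_tree_imp_wf_tree del: DLR.simps)
qed

theorem mainTheorem19: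
  fixes t :: tree
  assumes "binary_tree t"
  shows "(Delta t :: tree \<times> tree \<Rightarrow>\<^sub>0 'k::field) - DLR t \<in> tensor_ideal"
proof -
  have "(Delta t :: 'k tensor) = DLR t"
    using assms by (rule Delta_eq_DLR)
  then show ?thesis
    by (simp add: tensor_ideal.zero)
qed

end
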